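(* Let $U$ be a $\kappa$-cut with sides $A_1,\dots,A_a$ ($a\ge 2$) and let $W\neq U$ be another $\kappa$-cut with sides $B_1,\dots,B_b$ ($b\ge 2$). Put $T=U\cap W$, $W_i=W\cap A_i$ and $U_j=U\cap B_j$. Then at least one of the following holds. (Laminar type) $W$ is a laminar cut of $U$, and there are indices $i^*,j^*$ with $B_{j^*}\setminus A_{i^*}=(U\setminus W)\cup\bigcup_{i\ne i^*}A_i$ and $A_{i^*}\setminus B_{j^*}=(W\setminus U)\cup\bigcup_{j\neq j^*}B_j$. (Wheel type) $a=b=2$ and $(T;U_1,W_1,U_2,W_2)$ forms a $4$-wheel with sectors $A_1\cap B_1$, $A_1\cap B_2$, $A_2\cap B_2$, $A_2\cap B_1$. (Crossing matching type) $a=b=2$ and, after possibly renaming the two sides of $U$ and/or of $W$, $A_1\cap B_1\ne\emptyset$, $A_2\cap B_2\neq\emptyset$, $A_1\cap B_2=\emptyset$; moreover $|W_2|=|U_1|>0$, $|W_1|=|U_2|>0$, $W$ is a crossing matching cut of $U$ in side $A_1$ with respect to $U_2$, and if in addition $A_2\cap B_1\neq\emptyset$ then $|U_1|\ge|U_2|$. (Small type) $U$ is $(\mathrm{I},\kappa-1)$-small and all small sides of $U$ are contained in $W$, or $W$ is $(\mathrm{I},\kappa-1)$-small and all small sides of $W$ are contained in $U$.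
   Context: Standing conventions: $G=(V,E)$ is a finite, simple, connected, undirected, non-complete graph with $n=|V|$; $\kappa$ is its vertex connectivity (minimum size of a vertex set whose removal disconnects $G$), and it is assumed that $\kappa<n/4$. A cut is a set $U\subset V$ such that the subgraph induced on $V\setminus U$ is disconnected; a $\kappa$-cut is a cut with exactly $\kappa$ vertices. A side of a cut $U$ is (the vertex set of) a connected component of the subgraph induced on $V\setminus U$. A set $S$ disconnects $P$ from the rest of the graph if $P\neq\emptyset$, $P\cap S=\emptyset$, $V\setminus(S\cup P)\ne\emptyset$ and every path from $P$ to $V\setminus(S\cup P)$ meets $S$. Laminar cut: if $U$ is a cut and $P$ a side of $U$, a cut $W$ with $W\subseteq U\cup P$ is a laminar cut of $U$ in side $P$; a laminar cut of $U$ is a laminar cut of $U$ in some side. Small cuts: a cut $U$ with sides $A_1,\dots,A_a$ is $(\mathrm{I},t)$-small if there is an index $i^\sharp$ with $\sum_{i\neq i^\sharp}|A_i|\le t$; then $A_{i^\sharp}$ is its large side and the other sides are its small sides. Wheels: for $w\ge4$ (indices taken modulo $w$), if $V$ is partitioned into pairwise disjoint sets $T,C_1,\dots,C_w,S_1,\dots,S_w$ with all $C_i,S_i$ nonempty ($T$ may be empty) such that for every $i$ the set $C_i\cup T\cup C_{i+2}$ is a $\kappa$-cut that disconnects $S_i\cup C_{i+1}\cup S_{i+1}$ from the rest of the graph, then $(T;C_1,\dots,C_w)$ forms a $w$-wheel with sectors $S_1,\dots,S_w$. Matching cuts: let $U$ be a cut, $A$ a side of $U$, $P\subseteq U$. A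 $\kappa$-cut $W$ is a matching cut of $U$ in side $A$ with respect to $P$ if (i) $U\setminus P\subseteq W\subseteq U\cup A$, (ii) $A\setminus W\neq\emptyset$, and (iii) $W$ disconnects $P\cup(V\setminus(U\cup A))$ from $A\setminus W$ (i.e., these sets are disjoint from $W$ and every path between them meets $W$). If $U$ has exactly two sides $A,B$ and $\emptyset\neq P\subseteq U$, a $\kappa$-cut $W$ is a crossing matching cut of $U$ in side $A$ with respect to $P$ if (i) $W\cap B\neq\emptyset$ and (ii) $(U\setminus P)\cup(W\cap A)$ is a matching cut of $U$ in side $A$ with respect to $P$. *)

theory Defs
  imports Main
begin

definition simple_graph :: "'a set \<Rightarrow> ('a \<Rightarrow> 'a \<Rightarrow> bool) \<Rightarrow> bool" where
  "simple_graph V E \<longleftrightarrow> finite V \<and> (\<forall>u v. E u v \<longrightarrow> u \<in> V \<and> v \<in> V)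
     \<and> (\<forall>u v. E u v \<longrightarrow> E v u) \<and> (\<forall>u. \<not> E u u)"

definition reach_in :: "('a \<Rightarrow> 'a \<Rightarrow> bool) \<Rightarrow> 'a set \<Rightarrow> 'a \<Rightarrow> 'a \<Rightarrow> bool" where
  "reach_in E S x y \<longleftrightarrow> x \<in> S \<and> (\<lambda>u v. E u v \<and> u \<in> S \<and> v \<in> S)\<^sup>*\<^sup>* x y"

definition connected_graph :: "'a set \<Rightarrow> ('a \<Rightarrow> 'a \<Rightarrow> bool) \<Rightarrow> bool" where
  "connected_graph V E \<longleftrightarrow> V \<noteq> {} \<and> (\<forall>x\<in>V. \<forall>y\<in>V. reach_in E V x y)"

definition complete_graph :: "'a set \<Rightarrow> ('a \<Rightarrow> 'a \<Rightarrow> bool) \<Rightarrow> bool" where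
  "complete_graph V E \<longleftrightarrow> (\<forall>x\<in>V. \<forall>y\<in>V. x \<noteq> y \<longrightarrow> E x y)"

definition is_cut :: "'a set \<Rightarrow> ('a \<Rightarrow> 'a \<Rightarrow> bool) \<Rightarrow> 'a set \<Rightarrow> bool" where
  "is_cut V E U \<longleftrightarrow> U \<subseteq> V \<and> (\<exists>x\<in>V - U. \<exists>y\<in>V - U. \<not> reach_in E (V - U) x y)"

definition kappa :: "'a set \<Rightarrow> ('a \<Rightarrow> 'a \<Rightarrow> bool) \<Rightarrow> nat" where
  "kappa V E = (LEAST k. \<exists>U. is_cut V E U \<and> card U = k)"

definition kappa_cut :: "'a set \<Rightarrow> ('a \<Rightarrow> 'a \<Rightarrow> bool) \<Rightarrow> 'a set \<Rightarrow> bool" where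
  "kappa_cut V E U \<longleftrightarrow> is_cut V E U \<and> card U = kappa V E"

definition sides :: "'a set \<Rightarrow> ('a \<Rightarrow> 'a \<Rightarrow> bool) \<Rightarrow> 'a set \<Rightarrow> 'a set set" where
  "sides V E U = {C. \<exists>x\<in>V - U. C = {y. reach_in E (V - U) x y}}"

definition disconnects :: "'a set \<Rightarrow> ('a \<Rightarrow> 'a \<Rightarrow> bool) \<Rightarrow> 'a set \<Rightarrow> 'a set \<Rightarrow> bool" where
  "disconnects V E S P \<longleftrightarrow> P \<subseteq> V \<and> P \<noteq> {} \<and> P \<inter> S = {} \<and> V - (S \<union> P) \<noteq> {}
     \<and> (\<forall>x\<in>P. \<forall>y\<in>V - (S \<union> P). \<not> reach_in E (V - S) x y)"

definition separates :: "'a set \<Rightarrow> ('a \<Rightarrow> 'a \<Rightarrow> bool) \<Rightarrow> 'a set \<Rightarrow> 'a set \<Rightarrow> 'a set \<Rightarrow> bool" where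
  "separates V E W X Y \<longleftrightarrow> X \<inter> W = {} \<and> Y \<inter> W = {}
     \<and> (\<forall>x\<in>X. \<forall>y\<in>Y. \<not> reach_in E (V - W) x y)"

definition laminar_cut :: "'a set \<Rightarrow> ('a \<Rightarrow> 'a \<Rightarrow> bool) \<Rightarrow> 'a set \<Rightarrow> 'a set \<Rightarrow> bool" where
  "laminar_cut V E U W \<longleftrightarrow> is_cut V E U \<and> is_cut V E W \<and> (\<exists>P\<in>sides V E U. W \<subseteq> U \<union> P)"

definition small_with_large_side :: "'a set \<Rightarrow> ('a \<Rightarrow> 'a \<Rightarrow> bool) \<Rightarrow> nat \<Rightarrow> 'a set \<Rightarrow> 'a set \<Rightarrow> bool" where
  "small_with_large_side V E t U L \<longleftrightarrow> is_cut V E U \<and> L \<in> sides V E U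
     \<and> (\<Sum>S\<in>sides V E U - {L}. card S) \<le> t"

definition I_small :: "'a set \<Rightarrow> ('a \<Rightarrow> 'a \<Rightarrow> bool) \<Rightarrow> nat \<Rightarrow> 'a set \<Rightarrow> bool" where
  "I_small V E t U \<longleftrightarrow> (\<exists>L. small_with_large_side V E t U L)"

(* w-wheel (T; C_1..C_w) with sectors S_1..S_w; lists are 0-indexed, indices taken mod w *)
definition forms_wheel :: "'a set \<Rightarrow> ('a \<Rightarrow> 'a \<Rightarrow> bool) \<Rightarrow> nat \<Rightarrow> 'a set \<Rightarrow> 'a set list \<Rightarrow> 'a set list \<Rightarrow> bool" where
  "forms_wheel V E w T C S \<longleftrightarrow> w \<ge> 4 \<and> length C = w \<and> length S = w
     \<and> T \<union> \<Union>(set C) \<union> \<Union>(set S) = V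
     \<and> (\<forall>i<w. T \<inter> C ! i = {} \<and> T \<inter> S ! i = {} \<and> C ! i \<noteq> {} \<and> S ! i \<noteq> {})
     \<and> (\<forall>i<w. \<forall>j<w. C ! i \<inter> S ! j = {})
     \<and> (\<forall>i<w. \<forall>j<w. i \<noteq> j \<longrightarrow> C ! i \<inter> C ! j = {} \<and> S ! i \<inter> S ! j = {})
     \<and> (\<forall>i<w. kappa_cut V E (C ! i \<union> T \<union> C ! ((i + 2) mod w))
            \<and> disconnects V E (C ! i \<union> T \<union> C ! ((i + 2) mod w))
                 (S ! i \<union> C ! ((i + 1) mod w) \<union> S ! ((i + 1) mod w)))"

definition matching_cut :: "'a set \<Rightarrow> ('a \<Rightarrow> 'a \<Rightarrow> bool) \<Rightarrow> 'a set \<Rightarrow> 'a set \<Rightarrow> 'a set \<Rightarrow> 'a set \<Rightarrow> bool" where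
  "matching_cut V E U A P W \<longleftrightarrow> is_cut V E U \<and> A \<in> sides V E U \<and> P \<subseteq> U
     \<and> kappa_cut V E W \<and> U - P \<subseteq> W \<and> W \<subseteq> U \<union> A \<and> A - W \<noteq> {}
     \<and> separates V E W (P \<union> (V - (U \<union> A))) (A - W)"

definition crossing_matching_cut :: "'a set \<Rightarrow> ('a \<Rightarrow> 'a \<Rightarrow> bool) \<Rightarrow> 'a set \<Rightarrow> 'a set \<Rightarrow> 'a set \<Rightarrow> 'a set \<Rightarrow> bool" where
  "crossing_matching_cut V E U A P W \<longleftrightarrow> is_cut V E U \<and> P \<noteq> {} \<and> P \<subseteq> U
     \<and> (\<exists>B. B \<noteq> A \<and> sides V E U = {A, B} \<and> kappa_cut V E W \<and> W \<inter> B \<noteq> {}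
          \<and> matching_cut V E U A P ((U - P) \<union> (W \<inter> A)))"

end

(*
  Call the sets A_i \<inter> B_j the corners of U and W. The corner A_i \<inter> B_j is cut off from the
  rest of the graph by (W \<inter> A_i) \<union> (U \<inter> W) \<union> (U \<inter> B_j), so this set has at least \<kappa> vertices.
  If two opposite corners (i \<noteq> i', j \<noteq> j') are nonempty, their two separators together use
  each vertex of U and of W at most once, hence both have exactly \<kappa> vertices. This yields the
  cardinality identities, forces both cuts to have exactly two sides (or W to lie in U plus one
  side), and an empty corner A_1 \<inter> B_2 turns the separator of A_1 \<inter> B_1 into a matching cut.
  If W lies in U plus a single side of U, the vertices of U - W, each adjacent to every side of
  U, glue all other sides of U into one side of W: the laminar type.
  If no two opposite corners are nonempty, the nonempty corners form a star, so all sides but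
  one of one cut lie inside the other cut; they are small because they cannot fill it.
*)

theory Submission
  imports Defs
begin

section \<open>Paths inside a vertex set\<close>

lemma reach_in_refl: "x \<in> S \<Longrightarrow> reach_in E S x x"
  by (simp add: reach_in_def)

lemma reach_in_trans: "reach_in E S x y \<Longrightarrow> reach_in E S y z \<Longrightarrow> reach_in E S x z"
  unfolding reach_in_def by (meson rtranclp_trans)

lemma reach_in_induct [consumes 1, case_names refl step]:
  assumes "reach_in E S x y"
    and "P x"
    and "\<And>y z. reach_in E S x y \<Longrightarrow> P y \<Longrightarrow> E y z \<Longrightarrow> y \<in> S \<Longrightarrow> z \<in> S \<Longrightarrow> P z"
  shows "P y"
proof -
  have "(\<lambda>u v. E u v \<and> u \<in> S \<and> v \<in> S)\<^sup>*\<^sup>* x y" and "x \<in> S"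
    using assms(1) by (simp_all add: reach_in_def)
  then show ?thesis
    by (induction rule: rtranclp_induct) (use assms(2,3) in \<open>auto simp: reach_in_def\<close>)
qed

lemma reach_in_mem:
  assumes "reach_in E S x y"
  shows "x \<in> S" and "y \<in> S"
proof -
  show x: "x \<in> S" using assms by (simp add: reach_in_def)
  show "y \<in> S" using assms x by (induction rule: reach_in_induct) auto
qed

lemma reach_in_step:
  assumes "reach_in E S x y" and "E y z" and "z \<in> S"
  shows "reach_in E S x z"
  using assms reach_in_mem(2)[OF assms(1)] unfolding reach_in_def
  by (auto intro: rtranclp.rtrancl_into_rtrancl)

lemma reach_in_edge: "x \<in> S \<Longrightarrow> z \<in> S \<Longrightarrow> E x z \<Longrightarrow> reach_in E S x z"
  by (rule reach_in_step[OF reach_in_refl])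

lemma reach_in_mono:
  assumes "reach_in E S x y" and "S \<subseteq> S'"
  shows "reach_in E S' x y"
  using assms(1) by (induction rule: reach_in_induct)
    (use assms(2) reach_in_mem(1)[OF assms(1)] in \<open>auto intro: reach_in_refl reach_in_step\<close>)

lemma reach_in_sym:
  assumes "reach_in E S x y" and "\<And>u v. E u v \<Longrightarrow> E v u"
  shows "reach_in E S y x"
  using assms(1)
proof (induction rule: reach_in_induct)
  case refl
  show ?case using reach_in_mem(1)[OF assms(1)] by (rule reach_in_refl)
next
  case (step y z)
  then show ?case using assms(2) by (blast intro: reach_in_trans reach_in_edge)
qed

lemma reach_in_closed:
  assumes "reach_in E S x y" and "x \<in> C"
    and "\<And>c z. c \<in> C \<Longrightarrow> z \<in> S \<Longrightarrow> E c z \<Longrightarrow> z \<in> C"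
  shows "y \<in> C"
  using assms(1) by (induction rule: reach_in_induct) (use assms(2,3) in blast)+

lemma reach_in_within:
  assumes "reach_in E S x y" and "x \<in> C" and "C \<subseteq> S"
    and "\<And>c z. c \<in> C \<Longrightarrow> z \<in> S \<Longrightarrow> E c z \<Longrightarrow> z \<in> C"
  shows "reach_in E C x y"
  using assms(1)
proof (induction rule: reach_in_induct)
  case refl
  show ?case using assms(2) by (rule reach_in_refl)
next
  case (step y z)
  have "y \<in> C" using \<open>reach_in E C x y\<close> by (rule reach_in_mem(2))
  then have "z \<in> C" using assms(4) \<open>z \<in> S\<close> \<open>E y z\<close> by blast
  with \<open>reach_in E C x y\<close> \<open>E y z\<close> show ?case by (rule reach_in_step)
qed

lemma card_Un3_disjoint:
  assumes "finite A" "finite B" "finite C" "A \<inter> B = {}" "A \<inter> C = {}" "B \<inter> C = {}"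
  shows "card (A \<union> B \<union> C) = card A + card B + card C"
  using assms by (simp add: card_Un_disjoint Int_Un_distrib2)

lemma bij_betw_UNION_diff:
  assumes "bij_betw A I S" and "i \<in> I"
  shows "(\<Union>k\<in>I - {i}. A k) = \<Union>(S - {A i})"
proof -
  have "A ` (I - {i}) = S - {A i}"
    using assms inj_on_image_set_diff[of A I I "{i}"] by (simp add: bij_betw_def)
  then show ?thesis by simp
qed

lemma bij_betw_ex_other:
  fixes a :: nat
  assumes "bij_betw A {1..a} S" and "2 \<le> a" and "X \<in> S"
  shows "\<exists>X'\<in>S. X' \<noteq> X"
proof -
  have "1 \<in> {1..a}" "2 \<in> {1..a}" using assms(2) by simp_all
  moreover have "A 1 \<noteq> A 2"
    using inj_onD[OF bij_betw_imp_inj_on[OF assms(1)]] calculation by fastforce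
  ultimately show ?thesis using bij_betw_apply[OF assms(1)] by metis
qed

lemma bij_betw_two:
  fixes a :: nat
  assumes "bij_betw A {1..a} S" and "S = {X, X'}" and "X \<noteq> X'"
  shows "a = 2" and "S = {A 1, A 2}" and "A 1 \<noteq> A 2"
proof -
  have "card S = a" using bij_betw_same_card[OF assms(1)] by simp
  then show a: "a = 2" using assms(2,3) by simp
  have "{1..a} = {1, 2}" using a by auto
  then show "S = {A 1, A 2}" using bij_betw_imp_surj_on[OF assms(1)] by auto
  then show "A 1 \<noteq> A 2" using assms(2,3) by auto
qed

lemma all_less_four: "(\<forall>i<(4::nat). P i) \<longleftrightarrow> P 0 \<and> P 1 \<and> P 2 \<and> P 3"
proof
  assume "P 0 \<and> P 1 \<and> P 2 \<and> P 3"
  moreover have "i = 0 \<or> i = 1 \<or> i = 2 \<or> i = 3" if "i < 4" for i :: nat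
    using that by linarith
  ultimately show "\<forall>i<4. P i" by blast
qed simp

lemma no_independent_pairs_star:
  assumes "\<And>x y x' y'. R x y \<Longrightarrow> R x' y' \<Longrightarrow> x = x' \<or> y = y'"
  shows "(\<exists>x0. \<forall>x y. R x y \<longrightarrow> x = x0) \<or> (\<exists>y0. \<forall>x y. R x y \<longrightarrow> y = y0)"
proof (cases "\<exists>x1 y1 x2 y2. R x1 y1 \<and> R x2 y2 \<and> x1 \<noteq> x2")
  case True
  then obtain x1 y1 x2 y2 where "R x1 y1" "R x2 y2" "x1 \<noteq> x2" by blast
  then have "R x y \<Longrightarrow> y = y1" for x y using assms by metis
  then show ?thesis by blast
qed blast

section \<open>Sides of a cut\<close>

lemma kappa_le_card: "is_cut V E U \<Longrightarrow> kappa V E \<le> card U"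
  unfolding kappa_def by (rule Least_le) blast

locale sgraph =
  fixes V :: "'a set" and E :: "'a \<Rightarrow> 'a \<Rightarrow> bool"
  assumes simple: "simple_graph V E"
begin

lemma sym: "E u v \<Longrightarrow> E v u"
  using simple by (simp add: simple_graph_def)

lemma finite_V: "finite V"
  using simple by (simp add: simple_graph_def)

lemma kappa_cut_subset: "kappa_cut V E U \<Longrightarrow> U \<subseteq> V"
  by (simp add: kappa_cut_def is_cut_def)

lemma kappa_cut_finite: "kappa_cut V E U \<Longrightarrow> finite U"
  using kappa_cut_subset finite_V finite_subset by blast

lemma side_containing:
  assumes "x \<in> V - U"
  shows "{y. reach_in E (V - U) x y} \<in> sides V E U" and "x \<in> {y. reach_in E (V - U) x y}"
proof -
  show "x \<in> {y. reach_in E (V - U) x y}" using assms by (simp add: reach_in_refl)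
  then show "{y. reach_in E (V - U) x y} \<in> sides V E U"
    using assms unfolding sides_def by blast
qed

lemma side_eq:
  assumes "X \<in> sides V E U" and "x \<in> X"
  shows "X = {y. reach_in E (V - U) x y}"
proof -
  obtain x0 where X: "X = {y. reach_in E (V - U) x0 y}"
    using assms(1) unfolding sides_def by blast
  then have x0x: "reach_in E (V - U) x0 x"
    using assms(2) by simp
  then have "reach_in E (V - U) x x0"
    using reach_in_sym sym by metis
  with x0x show ?thesis
    unfolding X by (blast intro: reach_in_trans)
qed

lemma side_subset: "X \<in> sides V E U \<Longrightarrow> X \<subseteq> V - U"
  unfolding sides_def by (auto dest: reach_in_mem(2))

lemma side_nonempty: "X \<in> sides V E U \<Longrightarrow> X \<noteq> {}"
  unfolding sides_def by (auto intro: reach_in_refl)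

lemma sides_disjoint:
  assumes "X \<in> sides V E U" and "X' \<in> sides V E U" and "X \<noteq> X'"
  shows "X \<inter> X' = {}"
proof (rule ccontr)
  assume "X \<inter> X' \<noteq> {}"
  then obtain x where "x \<in> X" "x \<in> X'" by blast
  then show False using side_eq[OF assms(1)] side_eq[OF assms(2)] assms(3) by metis
qed

lemma side_reach_closed:
  assumes "X \<in> sides V E U" and "x \<in> X" and "reach_in E (V - U) x y"
  shows "y \<in> X"
  using side_eq[OF assms(1,2)] assms(3) by simp

lemma side_edge_closed:
  assumes "X \<in> sides V E U" and "x \<in> X" and "E x z" and "z \<in> V - U"
  shows "z \<in> X"
proof -
  have "x \<in> V - U" using assms(1,2) side_subset by blast
  with assms(3,4) have "reach_in E (V - U) x z" by (simp add: reach_in_edge)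
  with assms(1,2) show ?thesis by (rule side_reach_closed)
qed

lemma side_connected:
  assumes "X \<in> sides V E U" and "x \<in> X" and "y \<in> X"
  shows "reach_in E X x y"
proof (rule reach_in_within)
  show "reach_in E (V - U) x y" using side_eq[OF assms(1,2)] assms(3) by simp
  show "X \<subseteq> V - U" using assms(1) by (rule side_subset)
qed (use assms side_edge_closed in blast)+

lemma Union_sides: "\<Union>(sides V E U) = V - U"
  using side_subset side_containing by blast

lemma Union_sides_minus:
  assumes "X \<in> sides V E U"
  shows "\<Union>(sides V E U - {X}) = V - U - X"
  using Union_sides[of U] side_subset[OF assms] sides_disjoint[OF _ assms] by auto

lemma side_subset_cut_if_disjoint:
  assumes "X \<in> sides V E U" and "\<forall>Y\<in>sides V E W. X \<inter> Y = {}"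
  shows "X \<subseteq> W"
proof
  fix x assume "x \<in> X"
  show "x \<in> W"
  proof (rule ccontr)
    assume "x \<notin> W"
    then have "x \<in> V - W" using \<open>x \<in> X\<close> side_subset[OF assms(1)] by blast
    note side_containing[OF this]
    then show False using assms(2) \<open>x \<in> X\<close> by (meson disjoint_iff)
  qed
qed

text \<open>Otherwise \<open>U - {u}\<close> would still separate the side \<open>X\<close> from the others.\<close>

lemma kappa_cut_vertex_has_neighbour:
  assumes U: "kappa_cut V E U" and X: "X \<in> sides V E U" and X': "X' \<in> sides V E U"
    and "X' \<noteq> X" and u: "u \<in> U"
  shows "\<exists>x\<in>X. E u x"
proof (rule ccontr)
  assume no_edge: "\<not> (\<exists>x\<in>X. E u x)"
  obtain x y where x: "x \<in> X" and y: "y \<in> X'"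
    using side_nonempty[OF X] side_nonempty[OF X'] by blast
  have y_notin: "y \<notin> X" using sides_disjoint[OF X' X \<open>X' \<noteq> X\<close>] y by blast
  have closed: "z \<in> X" if "c \<in> X" "z \<in> V - (U - {u})" "E c z" for c z
  proof (cases "z = u")
    case True
    then show ?thesis using that(1,3) no_edge sym by blast
  next
    case False
    then show ?thesis using that side_edge_closed[OF X] by blast
  qed
  have "\<not> reach_in E (V - (U - {u})) x y"
    using reach_in_closed[of E _ x y X] x closed y_notin by blast
  moreover have "x \<in> V - (U - {u})" "y \<in> V - (U - {u})"
    using x y side_subset[OF X] side_subset[OF X'] by blast+
  ultimately have "is_cut V E (U - {u})"
    using kappa_cut_subset[OF U] unfolding is_cut_def by blast
  then have "kappa V E \<le> card (U - {u})" by (rule kappa_le_card)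
  moreover have "card (U - {u}) < card U"
    using kappa_cut_finite[OF U] u by (rule card_Diff1_less)
  ultimately show False using U by (simp add: kappa_cut_def)
qed

lemma kappa_cut_union_side_connected:
  assumes U: "kappa_cut V E U" and L: "L \<in> sides V E U" and L': "L' \<in> sides V E U"
    and "L' \<noteq> L" and x: "x \<in> U \<union> L" and y: "y \<in> U \<union> L"
  shows "reach_in E (U \<union> L) x y"
proof -
  obtain x0 where x0: "x0 \<in> L" using side_nonempty[OF L] by blast
  have reach: "reach_in E (U \<union> L) x0 z" if z: "z \<in> U \<union> L" for z
  proof (cases "z \<in> U")
    case True
    then obtain x where x: "x \<in> L" "E z x"
      using kappa_cut_vertex_has_neighbour[OF U L L' \<open>L' \<noteq> L\<close>] by blast
    have "reach_in E (U \<union> L) x0 x"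
      using side_connected[OF L x0 x(1)] by (rule reach_in_mono) blast
    then show ?thesis using x(2) z sym by (blast intro: reach_in_step)
  next
    case False
    then show ?thesis
      using side_connected[OF L x0] z by (blast intro: reach_in_mono)
  qed
  have "reach_in E (U \<union> L) x x0"
    using reach[OF x] sym by (rule reach_in_sym)
  then show ?thesis using reach[OF y] by (rule reach_in_trans)
qed

lemma side_disconnects:
  assumes X: "X \<in> sides V E U" and X': "X' \<in> sides V E U" and "X \<noteq> X'"
  shows "disconnects V E U X"
proof -
  have "V - (U \<union> X) \<noteq> {}"
    using side_nonempty[OF X'] side_subset[OF X'] sides_disjoint[OF X X' \<open>X \<noteq> X'\<close>] by blast
  moreover have "\<not> reach_in E (V - U) x y" if "x \<in> X" "y \<in> V - (U \<union> X)" for x y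
    using side_reach_closed[OF X \<open>x \<in> X\<close>] that(2) by blast
  ultimately show ?thesis
    unfolding disconnects_def using side_subset[OF X] side_nonempty[OF X] by blast
qed

end

section \<open>Corners of two cuts\<close>

definition corner_separator :: "'a set \<Rightarrow> 'a set \<Rightarrow> 'a set \<Rightarrow> 'a set \<Rightarrow> 'a set" where
  "corner_separator U W X Y = (W \<inter> X) \<union> (U \<inter> W) \<union> (U \<inter> Y)"

lemma card_corner_separator_le:
  "card (corner_separator U W X Y) \<le> card (W \<inter> X) + card (U \<inter> W) + card (U \<inter> Y)"
  unfolding corner_separator_def by (meson add_le_mono card_Un_le le_trans order_refl)

context sgraph
begin

lemma corner_edge_closed:
  assumes X: "X \<in> sides V E U" and Y: "Y \<in> sides V E W"
    and c: "c \<in> X \<inter> Y" and z: "z \<in> V - corner_separator U W X Y" and "E c z"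
  shows "z \<in> X \<inter> Y"
proof -
  have "z \<notin> U"
  proof
    assume "z \<in> U"
    then have "z \<in> Y" using side_edge_closed[OF Y _ \<open>E c z\<close>] c z
      unfolding corner_separator_def by blast
    then show False using \<open>z \<in> U\<close> z unfolding corner_separator_def by blast
  qed
  then have "z \<in> X" using side_edge_closed[OF X _ \<open>E c z\<close>] c z by blast
  moreover from this have "z \<in> Y" using side_edge_closed[OF Y _ \<open>E c z\<close>] c z
    unfolding corner_separator_def by blast
  ultimately show ?thesis by blast
qed

lemma corner_separator_is_cut:
  assumes "U \<subseteq> V" and "W \<subseteq> V"
    and X: "X \<in> sides V E U" and Y: "Y \<in> sides V E W" and "X \<inter> Y \<noteq> {}"
    and X': "X' \<in> sides V E U" and "X \<noteq> X'"
  shows "is_cut V E (corner_separator U W X Y)"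
proof -
  let ?N = "corner_separator U W X Y"
  obtain x where x: "x \<in> X \<inter> Y" using \<open>X \<inter> Y \<noteq> {}\<close> by blast
  obtain y where y: "y \<in> X'" using side_nonempty[OF X'] by blast
  have y_out: "y \<notin> X" using y sides_disjoint[OF X X' \<open>X \<noteq> X'\<close>] by blast
  have "\<not> reach_in E (V - ?N) x y"
  proof
    assume "reach_in E (V - ?N) x y"
    then have "y \<in> X \<inter> Y"
      using x by (rule reach_in_closed) (rule corner_edge_closed[OF X Y])
    with y_out show False by blast
  qed
  moreover have "x \<in> V - ?N" "y \<in> V - ?N"
    using x y y_out side_subset[OF X] side_subset[OF Y] side_subset[OF X']
    unfolding corner_separator_def by auto
  moreover have "?N \<subseteq> V" using assms(1,2) unfolding corner_separator_def by blast
  ultimately show ?thesis unfolding is_cut_def by blast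
qed

lemma kappa_le_corner:
  assumes "kappa_cut V E U" and "kappa_cut V E W"
    and "X \<in> sides V E U" and "Y \<in> sides V E W" and "X \<inter> Y \<noteq> {}"
    and "X' \<in> sides V E U" and "X \<noteq> X'"
  shows "kappa V E \<le> card (W \<inter> X) + card (U \<inter> W) + card (U \<inter> Y)"
  using kappa_le_card[OF corner_separator_is_cut] kappa_cut_subset assms card_corner_separator_le
  by (meson le_trans)

text \<open>Two opposite nonempty corners give two separators which together use each vertex of
  \<open>U \<union> W\<close> at most once, so both have exactly \<open>\<kappa>\<close> vertices and they exhaust \<open>W\<close>.\<close>

lemma opposite_corners:
  assumes U: "kappa_cut V E U" and W: "kappa_cut V E W"
    and X: "X \<in> sides V E U" and X': "X' \<in> sides V E U" and "X \<noteq> X'"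
    and Y: "Y \<in> sides V E W" and Y': "Y' \<in> sides V E W" and "Y \<noteq> Y'"
    and "X \<inter> Y \<noteq> {}" and "X' \<inter> Y' \<noteq> {}"
  shows "card (W \<inter> X) + card (U \<inter> W) + card (U \<inter> Y) = kappa V E"
    and "card (W \<inter> X') + card (U \<inter> W) + card (U \<inter> Y') = kappa V E"
    and "card (W \<inter> X) + card (W \<inter> X') + card (U \<inter> W) = kappa V E"
    and "W \<subseteq> X \<union> X' \<union> U"
proof -
  have fin: "finite U" "finite W" using kappa_cut_finite U W by blast+
  have disj: "X \<inter> X' = {}" "Y \<inter> Y' = {}"
    using sides_disjoint X X' Y Y' \<open>X \<noteq> X'\<close> \<open>Y \<noteq> Y'\<close> by blast+
  have sub: "X \<inter> U = {}" "X' \<inter> U = {}" "Y \<inter> W = {}" "Y' \<inter> W = {}"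
    using side_subset X X' Y Y' by blast+
  let ?ZW = "(W \<inter> X) \<union> (W \<inter> X') \<union> (U \<inter> W)"
  have card_ZW: "card ?ZW = card (W \<inter> X) + card (W \<inter> X') + card (U \<inter> W)"
    using fin disj sub by (intro card_Un3_disjoint) blast+
  have "card ((U \<inter> Y) \<union> (U \<inter> Y') \<union> (U \<inter> W)) = card (U \<inter> Y) + card (U \<inter> Y') + card (U \<inter> W)"
    using fin disj sub by (intro card_Un3_disjoint) blast+
  moreover have "card ((U \<inter> Y) \<union> (U \<inter> Y') \<union> (U \<inter> W)) \<le> kappa V E"
    using U fin by (metis card_mono kappa_cut_def Int_Un_distrib Int_lower1)
  moreover have "card ?ZW \<le> kappa V E"
    using W fin by (metis card_mono kappa_cut_def Int_Un_distrib2 Int_lower1 Un_commute inf_commute)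
  moreover have "kappa V E \<le> card (W \<inter> X) + card (U \<inter> W) + card (U \<inter> Y)"
    by (rule kappa_le_corner[OF U W X Y \<open>X \<inter> Y \<noteq> {}\<close> X' \<open>X \<noteq> X'\<close>])
  moreover have "kappa V E \<le> card (W \<inter> X') + card (U \<inter> W) + card (U \<inter> Y')"
    by (rule kappa_le_corner[OF U W X' Y' \<open>X' \<inter> Y' \<noteq> {}\<close> X \<open>X \<noteq> X'\<close>[symmetric]])
  ultimately show "card (W \<inter> X) + card (U \<inter> W) + card (U \<inter> Y) = kappa V E"
    and "card (W \<inter> X') + card (U \<inter> W) + card (U \<inter> Y') = kappa V E"
    and full: "card (W \<inter> X) + card (W \<inter> X') + card (U \<inter> W) = kappa V E"
    using card_ZW by linarith+
  have "?ZW = W"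
    using card_subset_eq[of W ?ZW] fin full card_ZW W by (auto simp: kappa_cut_def)
  then show "W \<subseteq> X \<union> X' \<union> U" by blast
qed

text \<open>A third side of \<open>U\<close> would avoid \<open>W\<close>, hence meet a side of \<open>W\<close> other than \<open>Y\<close> or
  \<open>Y'\<close>; the resulting pair of opposite corners forces \<open>W\<close> to miss \<open>X'\<close> or \<open>X\<close>.\<close>

lemma opposite_corners_two_sides:
  assumes U: "kappa_cut V E U" and W: "kappa_cut V E W"
    and X: "X \<in> sides V E U" and X': "X' \<in> sides V E U" and "X \<noteq> X'"
    and Y: "Y \<in> sides V E W" and Y': "Y' \<in> sides V E W" and "Y \<noteq> Y'"
    and XY: "X \<inter> Y \<noteq> {}" and XY': "X' \<inter> Y' \<noteq> {}"
    and "W \<inter> X \<noteq> {}" and "W \<inter> X' \<noteq> {}"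
  shows "sides V E U = {X, X'}"
proof -
  have "X'' \<in> {X, X'}" if X'': "X'' \<in> sides V E U" for X''
  proof (rule ccontr)
    assume new: "X'' \<notin> {X, X'}"
    then have disj: "X'' \<inter> X = {}" "X'' \<inter> X' = {}" "X \<inter> X' = {}"
      using sides_disjoint X X' X'' \<open>X \<noteq> X'\<close> by blast+
    obtain x where x: "x \<in> X''" using side_nonempty[OF X''] by blast
    have "x \<notin> W"
      using opposite_corners(4)[OF U W X X' \<open>X \<noteq> X'\<close> Y Y' \<open>Y \<noteq> Y'\<close> XY XY'] x disj
        side_subset[OF X''] by blast
    then have "x \<in> V - W" using x side_subset[OF X''] by blast
    from side_containing[OF this] obtain Y'' where Y'': "Y'' \<in> sides V E W" and "x \<in> Y''"
      by blast
    then have X''Y'': "X'' \<inter> Y'' \<noteq> {}" using x by blast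
    show False
    proof (cases "Y'' = Y")
      case False
      have "W \<subseteq> X'' \<union> X \<union> U"
        using new by (intro opposite_corners(4)[OF U W X'' X _ Y'' Y False X''Y'' XY]) blast
      then show False using \<open>W \<inter> X' \<noteq> {}\<close> disj side_subset[OF X'] by blast
    next
      case True
      then have "Y'' \<noteq> Y'" using \<open>Y \<noteq> Y'\<close> by simp
      have "W \<subseteq> X'' \<union> X' \<union> U"
        using new by (intro opposite_corners(4)[OF U W X'' X' _ Y'' Y' \<open>Y'' \<noteq> Y'\<close> X''Y'' XY']) blast
      then show False using \<open>W \<inter> X \<noteq> {}\<close> disj side_subset[OF X] by blast
    qed
  qed
  then show ?thesis using X X' by blast
qed

end

section \<open>The four types\<close>

definition crossing_type ::
    "'a set \<Rightarrow> ('a \<Rightarrow> 'a \<Rightarrow> bool) \<Rightarrow> 'a set \<Rightarrow> 'a set \<Rightarrow> 'a set \<Rightarrow> 'a set \<Rightarrow> 'a set \<Rightarrow> 'a set \<Rightarrow> bool" where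
  "crossing_type V E U W A1 A2 B1 B2 \<longleftrightarrow>
     A1 \<inter> B1 \<noteq> {} \<and> A2 \<inter> B2 \<noteq> {} \<and> A1 \<inter> B2 = {} \<and>
     card (W \<inter> A2) = card (U \<inter> B1) \<and> card (U \<inter> B1) > 0 \<and>
     card (W \<inter> A1) = card (U \<inter> B2) \<and> card (U \<inter> B2) > 0 \<and>
     crossing_matching_cut V E U A1 (U \<inter> B2) W \<and>
     (A2 \<inter> B1 \<noteq> {} \<longrightarrow> card (U \<inter> B1) \<ge> card (U \<inter> B2))"

context sgraph
begin

lemma kappa_cuts_not_subset:
  assumes "kappa_cut V E U" and "kappa_cut V E W" and "W \<noteq> U"
  shows "\<not> U \<subseteq> W"
  using assms card_subset_eq[of W U] kappa_cut_finite by (auto simp: kappa_cut_def)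

text \<open>If \<open>W\<close> lies in \<open>U\<close> together with a single side \<open>X\<close>, then all other sides of \<open>U\<close> and
  \<open>U - W\<close> hang together in \<open>V - W\<close>: every vertex of \<open>U - W\<close> has a neighbour in each side.\<close>

lemma laminar_outside_in_one_side:
  assumes U: "kappa_cut V E U" and W: "kappa_cut V E W" and "W \<noteq> U"
    and X: "X \<in> sides V E U" and X': "X' \<in> sides V E U" and "X' \<noteq> X"
    and WX: "W \<subseteq> U \<union> X"
  shows "\<exists>Y\<in>sides V E W. V - (X \<union> W) \<subseteq> Y"
proof -
  obtain u0 where u0: "u0 \<in> U" "u0 \<notin> W"
    using kappa_cuts_not_subset[OF U W \<open>W \<noteq> U\<close>] by blast
  then have u0_out: "u0 \<in> V - W" using kappa_cut_subset[OF U] by blast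
  have other_out: "X'' \<subseteq> V - W" if "X'' \<in> sides V E U" "X'' \<noteq> X" for X''
    using sides_disjoint[OF that(1) X that(2)] side_subset[OF that(1)] WX by blast
  have reach_other: "reach_in E (V - W) u0 y"
    if X'': "X'' \<in> sides V E U" "X'' \<noteq> X" and y: "y \<in> X''" for X'' y
  proof -
    obtain x where x: "x \<in> X''" "E u0 x"
      using kappa_cut_vertex_has_neighbour[OF U X''(1) X X''(2)[symmetric] u0(1)] by blast
    have "reach_in E (V - W) u0 x"
      using u0_out other_out[OF X''] x by (blast intro: reach_in_edge)
    moreover have "reach_in E (V - W) x y"
      using side_connected[OF X''(1) x(1) y] other_out[OF X''] by (rule reach_in_mono)
    ultimately show ?thesis by (rule reach_in_trans)
  qed
  have reach_cut: "reach_in E (V - W) u0 u" if u: "u \<in> U - W" for u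
  proof -
    obtain x where x: "x \<in> X'" "E u x"
      using kappa_cut_vertex_has_neighbour[OF U X' X \<open>X' \<noteq> X\<close>[symmetric]] u by blast
    have "u \<in> V - W" using u kappa_cut_subset[OF U] by blast
    then have "reach_in E (V - W) x u"
      using x other_out[OF X' \<open>X' \<noteq> X\<close>] sym by (blast intro: reach_in_edge)
    with reach_other[OF X' \<open>X' \<noteq> X\<close> x(1)] show ?thesis by (rule reach_in_trans)
  qed
  have "V - (X \<union> W) \<subseteq> {y. reach_in E (V - W) u0 y}"
  proof
    fix z assume z: "z \<in> V - (X \<union> W)"
    show "z \<in> {y. reach_in E (V - W) u0 y}"
    proof (cases "z \<in> U")
      case True
      then show ?thesis using z reach_cut by blast
    next
      case False
      then obtain X'' where "X'' \<in> sides V E U" "z \<in> X''"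
        using z side_containing[of z U] by blast
      then show ?thesis using z reach_other by blast
    qed
  qed
  then show ?thesis using side_containing(1)[OF u0_out] by blast
qed

lemma laminar_side_differences:
  assumes "U \<subseteq> V" and "W \<subseteq> V" and X: "X \<in> sides V E U" and Y: "Y \<in> sides V E W"
    and WX: "W \<subseteq> U \<union> X" and XY: "V - (X \<union> W) \<subseteq> Y"
  shows "Y - X = (U - W) \<union> \<Union>(sides V E U - {X})"
    and "X - Y = (W - U) \<union> \<Union>(sides V E W - {Y})"
  using assms side_subset[OF X] side_subset[OF Y]
  unfolding Union_sides_minus[OF X] Union_sides_minus[OF Y] by blast+

lemma laminar_type:
  fixes a b :: nat
  assumes U: "kappa_cut V E U" and W: "kappa_cut V E W" and "W \<noteq> U"
    and A: "bij_betw A {1..a} (sides V E U)" and "2 \<le> a"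
    and B: "bij_betw B {1..b} (sides V E W)"
    and X: "X \<in> sides V E U" and WX: "W \<subseteq> U \<union> X"
  shows "laminar_cut V E U W \<and>
       (\<exists>i\<in>{1..a}. \<exists>j\<in>{1..b}.
          B j - A i = (U - W) \<union> (\<Union>k\<in>{1..a} - {i}. A k) \<and>
          A i - B j = (W - U) \<union> (\<Union>k\<in>{1..b} - {j}. B k))"
proof
  show "laminar_cut V E U W"
    using U W X WX unfolding laminar_cut_def kappa_cut_def by blast
  obtain X' where X': "X' \<in> sides V E U" "X' \<noteq> X"
    using bij_betw_ex_other[OF A \<open>2 \<le> a\<close> X] by blast
  obtain Y where Y: "Y \<in> sides V E W" and XY: "V - (X \<union> W) \<subseteq> Y"
    using laminar_outside_in_one_side[OF U W \<open>W \<noteq> U\<close> X X' WX] by blast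
  obtain i j where i: "i \<in> {1..a}" "A i = X" and j: "j \<in> {1..b}" "B j = Y"
    using A B X Y by (metis bij_betw_imp_surj_on imageE)
  note differences = laminar_side_differences[OF kappa_cut_subset[OF U] kappa_cut_subset[OF W]
      X Y WX XY]
  show "\<exists>i\<in>{1..a}. \<exists>j\<in>{1..b}.
          B j - A i = (U - W) \<union> (\<Union>k\<in>{1..a} - {i}. A k) \<and>
          A i - B j = (W - U) \<union> (\<Union>k\<in>{1..b} - {j}. B k)"
    using i j differences bij_betw_UNION_diff[OF A i(1)] bij_betw_UNION_diff[OF B j(1)] by metis
qed

text \<open>Each of the four cuts \<open>C\<^sub>i \<union> T \<union> C\<^sub>i\<^sub>+\<^sub>2\<close> of the wheel is \<open>U\<close> or \<open>W\<close>, and the set it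
  disconnects is one of their sides.\<close>

lemma wheel_type:
  assumes U: "kappa_cut V E U" and W: "kappa_cut V E W"
    and SU: "sides V E U = {A1, A2}" and "A1 \<noteq> A2"
    and SW: "sides V E W = {B1, B2}" and "B1 \<noteq> B2"
    and "A1 \<inter> B1 \<noteq> {}" "A1 \<inter> B2 \<noteq> {}" "A2 \<inter> B1 \<noteq> {}" "A2 \<inter> B2 \<noteq> {}"
    and "W \<inter> A1 \<noteq> {}" "W \<inter> A2 \<noteq> {}" "U \<inter> B1 \<noteq> {}" "U \<inter> B2 \<noteq> {}"
  shows "forms_wheel V E 4 (U \<inter> W) [U \<inter> B1, W \<inter> A1, U \<inter> B2, W \<inter> A2]
           [A1 \<inter> B1, A1 \<inter> B2, A2 \<inter> B2, A2 \<inter> B1]"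
proof -
  have A: "A1 \<in> sides V E U" "A2 \<in> sides V E U" and B: "B1 \<in> sides V E W" "B2 \<in> sides V E W"
    using SU SW by auto
  have disj: "A1 \<inter> A2 = {}" "B1 \<inter> B2 = {}"
    using sides_disjoint A B \<open>A1 \<noteq> A2\<close> \<open>B1 \<noteq> B2\<close> by blast+
  have cover: "V - U = A1 \<union> A2" "V - W = B1 \<union> B2"
    using Union_sides[of U] Union_sides[of W] SU SW by simp_all
  have sub: "U \<subseteq> V" "W \<subseteq> V" using kappa_cut_subset U W by blast+
  let ?C = "[U \<inter> B1, W \<inter> A1, U \<inter> B2, W \<inter> A2]" and ?S = "[A1 \<inter> B1, A1 \<inter> B2, A2 \<inter> B2, A2 \<inter> B1]"
  have "disconnects V E U A1" "disconnects V E U A2" "disconnects V E W B1" "disconnects V E W B2"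
    using side_disconnects A B \<open>A1 \<noteq> A2\<close> \<open>B1 \<noteq> B2\<close> by metis+
  moreover have "U \<inter> B1 \<union> U \<inter> W \<union> U \<inter> B2 = U" "U \<inter> B2 \<union> U \<inter> W \<union> U \<inter> B1 = U"
    "W \<inter> A1 \<union> U \<inter> W \<union> W \<inter> A2 = W" "W \<inter> A2 \<union> U \<inter> W \<union> W \<inter> A1 = W"
    "A1 \<inter> B1 \<union> W \<inter> A1 \<union> A1 \<inter> B2 = A1" "A2 \<inter> B2 \<union> W \<inter> A2 \<union> A2 \<inter> B1 = A2"
    "A1 \<inter> B2 \<union> U \<inter> B2 \<union> A2 \<inter> B2 = B2" "A2 \<inter> B1 \<union> U \<inter> B1 \<union> A1 \<inter> B1 = B1"
    using cover sub by blast+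
  ultimately have "\<forall>i<4. kappa_cut V E (?C ! i \<union> U \<inter> W \<union> ?C ! ((i + 2) mod 4))
      \<and> disconnects V E (?C ! i \<union> U \<inter> W \<union> ?C ! ((i + 2) mod 4))
          (?S ! i \<union> ?C ! ((i + 1) mod 4) \<union> ?S ! ((i + 1) mod 4))"
    unfolding all_less_four using U W by simp
  moreover have "\<forall>i<4. \<forall>j<4. ?C ! i \<inter> ?S ! j = {}"
    unfolding all_less_four using cover by auto
  moreover have "\<forall>i<4. \<forall>j<4. i \<noteq> j \<longrightarrow> ?C ! i \<inter> ?C ! j = {} \<and> ?S ! i \<inter> ?S ! j = {}"
    unfolding all_less_four using cover disj by auto
  moreover have "\<forall>i<4. U \<inter> W \<inter> ?C ! i = {} \<and> U \<inter> W \<inter> ?S ! i = {} \<and> ?C ! i \<noteq> {} \<and> ?S ! i \<noteq> {}"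
    unfolding all_less_four using cover assms(7-14) by auto
  moreover have "U \<inter> W \<union> \<Union>(set ?C) \<union> \<Union>(set ?S) = V"
    using cover sub by auto
  ultimately show ?thesis unfolding forms_wheel_def by simp
qed

text \<open>As \<open>A1 \<inter> B2\<close> is empty, the separator of the corner \<open>A1 \<inter> B1\<close> is
  \<open>(U - U \<inter> B2) \<union> (W \<inter> A1)\<close>, and it has exactly \<open>\<kappa>\<close> vertices.\<close>

lemma crossing_matching_cut_if_corner_empty:
  assumes U: "kappa_cut V E U" and W: "kappa_cut V E W"
    and SU: "sides V E U = {A1, A2}" and "A1 \<noteq> A2"
    and SW: "sides V E W = {B1, B2}" and "B1 \<noteq> B2"
    and c11: "A1 \<inter> B1 \<noteq> {}" and c22: "A2 \<inter> B2 \<noteq> {}" and c12: "A1 \<inter> B2 = {}"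
    and "W \<inter> A2 \<noteq> {}" and "U \<inter> B2 \<noteq> {}"
  shows "crossing_matching_cut V E U A1 (U \<inter> B2) W"
proof -
  have A: "A1 \<in> sides V E U" "A2 \<in> sides V E U" and B: "B1 \<in> sides V E W" "B2 \<in> sides V E W"
    using SU SW by auto
  have disj: "A1 \<inter> A2 = {}" "B1 \<inter> B2 = {}"
    using sides_disjoint A B \<open>A1 \<noteq> A2\<close> \<open>B1 \<noteq> B2\<close> by blast+
  have cover: "V - U = A1 \<union> A2" "V - W = B1 \<union> B2"
    using Union_sides[of U] Union_sides[of W] SU SW by simp_all
  let ?N = "corner_separator U W A1 B1"
  have N_eq: "(U - U \<inter> B2) \<union> (W \<inter> A1) = ?N"
    using cover disj kappa_cut_subset[OF U] unfolding corner_separator_def by blast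
  have "is_cut V E ?N"
    using corner_separator_is_cut kappa_cut_subset U W A B c11 \<open>A1 \<noteq> A2\<close> by blast
  moreover have "card ?N \<le> kappa V E"
    using card_corner_separator_le[of U W A1 B1]
      opposite_corners(1)[OF U W A \<open>A1 \<noteq> A2\<close> B \<open>B1 \<noteq> B2\<close> c11 c22] by linarith
  ultimately have N_cut: "kappa_cut V E ?N"
    unfolding kappa_cut_def using kappa_le_card by (blast intro: antisym)
  have A1_N: "A1 - ?N = A1 \<inter> B1"
    using cover c12 disj unfolding corner_separator_def by blast
  have "\<not> reach_in E (V - ?N) x y" if "x \<in> U \<inter> B2 \<union> (V - (U \<union> A1))" "y \<in> A1 \<inter> B1" for x y
  proof
    assume "reach_in E (V - ?N) x y"
    then have "reach_in E (V - ?N) y x" using sym by (rule reach_in_sym)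
    then have "x \<in> A1 \<inter> B1"
      using \<open>y \<in> A1 \<inter> B1\<close> by (rule reach_in_closed) (rule corner_edge_closed[OF A(1) B(1)])
    then show False using that(1) disj by blast
  qed
  then have "separates V E ?N (U \<inter> B2 \<union> (V - (U \<union> A1))) (A1 - ?N)"
    unfolding separates_def A1_N using cover disj unfolding corner_separator_def by blast
  moreover have "U - U \<inter> B2 \<subseteq> ?N" "?N \<subseteq> U \<union> A1"
    using N_eq[symmetric] by blast+
  ultimately have "matching_cut V E U A1 (U \<inter> B2) ((U - U \<inter> B2) \<union> (W \<inter> A1))"
    unfolding matching_cut_def N_eq using U A(1) N_cut A1_N c11 by (simp add: kappa_cut_def)
  then show ?thesis
    unfolding crossing_matching_cut_def
    using U W SU \<open>A1 \<noteq> A2\<close> \<open>W \<inter> A2 \<noteq> {}\<close> \<open>U \<inter> B2 \<noteq> {}\<close> unfolding kappa_cut_def by blast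
qed

text \<open>The final inequality comes from the separator of the corner \<open>A2 \<inter> B1\<close>, which has at
  least \<open>\<kappa> = |W|\<close> vertices.\<close>

lemma crossing_type_if_corner_empty:
  assumes U: "kappa_cut V E U" and W: "kappa_cut V E W"
    and SU: "sides V E U = {A1, A2}" and "A1 \<noteq> A2"
    and SW: "sides V E W = {B1, B2}" and "B1 \<noteq> B2"
    and c11: "A1 \<inter> B1 \<noteq> {}" and c22: "A2 \<inter> B2 \<noteq> {}" and c12: "A1 \<inter> B2 = {}"
    and "W \<inter> A2 \<noteq> {}" and "U \<inter> B1 \<noteq> {}" and "U \<inter> B2 \<noteq> {}"
  shows "crossing_type V E U W A1 A2 B1 B2"
proof -
  have A: "A1 \<in> sides V E U" "A2 \<in> sides V E U" and B: "B1 \<in> sides V E W" "B2 \<in> sides V E W"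
    using SU SW by auto
  note cards = opposite_corners(1-3)[OF U W A \<open>A1 \<noteq> A2\<close> B \<open>B1 \<noteq> B2\<close> c11 c22]
  have "card (U \<inter> B1) > 0" "card (U \<inter> B2) > 0"
    using \<open>U \<inter> B1 \<noteq> {}\<close> \<open>U \<inter> B2 \<noteq> {}\<close> kappa_cut_finite[OF U] by (simp_all add: card_gt_0_iff)
  moreover have "card (U \<inter> B1) \<ge> card (U \<inter> B2)" if "A2 \<inter> B1 \<noteq> {}"
    using kappa_le_corner[OF U W A(2) B(1) that A(1) \<open>A1 \<noteq> A2\<close>[symmetric]] cards by linarith
  moreover have "crossing_matching_cut V E U A1 (U \<inter> B2) W"
    using crossing_matching_cut_if_corner_empty assms by blast
  ultimately show ?thesis
    unfolding crossing_type_def using c11 c22 c12 cards by auto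
qed

lemma two_sided_types:
  assumes U: "kappa_cut V E U" and W: "kappa_cut V E W"
    and SU: "sides V E U = {A1, A2}" and "A1 \<noteq> A2"
    and SW: "sides V E W = {B1, B2}" and "B1 \<noteq> B2"
    and nonempty: "W \<inter> A1 \<noteq> {}" "W \<inter> A2 \<noteq> {}" "U \<inter> B1 \<noteq> {}" "U \<inter> B2 \<noteq> {}"
    and diagonal: "(A1 \<inter> B1 \<noteq> {} \<and> A2 \<inter> B2 \<noteq> {}) \<or> (A1 \<inter> B2 \<noteq> {} \<and> A2 \<inter> B1 \<noteq> {})"
  shows "forms_wheel V E 4 (U \<inter> W) [U \<inter> B1, W \<inter> A1, U \<inter> B2, W \<inter> A2]
           [A1 \<inter> B1, A1 \<inter> B2, A2 \<inter> B2, A2 \<inter> B1]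
     \<or> (\<exists>A1' A2' B1' B2'. (A1', A2') \<in> {(A1, A2), (A2, A1)} \<and> (B1', B2') \<in> {(B1, B2), (B2, B1)} \<and>
          crossing_type V E U W A1' A2' B1' B2')"
proof (cases "A1 \<inter> B1 \<noteq> {} \<and> A1 \<inter> B2 \<noteq> {} \<and> A2 \<inter> B1 \<noteq> {} \<and> A2 \<inter> B2 \<noteq> {}")
  case True
  then show ?thesis using wheel_type[OF U W SU \<open>A1 \<noteq> A2\<close> SW \<open>B1 \<noteq> B2\<close>] nonempty by blast
next
  case False
  then obtain A1' A2' B1' B2' where
    order: "(A1', A2') \<in> {(A1, A2), (A2, A1)}" "(B1', B2') \<in> {(B1, B2), (B2, B1)}"
    and corners: "A1' \<inter> B1' \<noteq> {}" "A2' \<inter> B2' \<noteq> {}" "A1' \<inter> B2' = {}"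
    using diagonal by blast
  have sides': "sides V E U = {A1', A2'}" "A1' \<noteq> A2'" "sides V E W = {B1', B2'}" "B1' \<noteq> B2'"
    using order SU SW \<open>A1 \<noteq> A2\<close> \<open>B1 \<noteq> B2\<close> by auto
  have nonempty': "W \<inter> A2' \<noteq> {}" "U \<inter> B1' \<noteq> {}" "U \<inter> B2' \<noteq> {}"
    using order nonempty by auto
  have "crossing_type V E U W A1' A2' B1' B2'"
    by (rule crossing_type_if_corner_empty[OF U W sides' corners nonempty'])
  then show ?thesis using order by blast
qed

text \<open>Otherwise \<open>V - W\<close> would be \<open>U \<union> L\<close>, which is connected.\<close>

lemma small_with_large_side_if_others_in_cut:
  assumes U: "kappa_cut V E U" and W: "kappa_cut V E W"
    and L: "L \<in> sides V E U" and L': "L' \<in> sides V E U" and "L' \<noteq> L"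
    and others: "\<forall>X\<in>sides V E U - {L}. X \<subseteq> W"
  shows "small_with_large_side V E (kappa V E - 1) U L"
proof -
  let ?Z = "\<Union>(sides V E U - {L})"
  have "?Z \<noteq> W"
  proof
    assume "?Z = W"
    then have "V - W = U \<union> L"
      using Union_sides_minus[OF L] side_subset[OF L] kappa_cut_subset[OF U] by blast
    moreover obtain x y where "x \<in> V - W" "y \<in> V - W" "\<not> reach_in E (V - W) x y"
      using W unfolding kappa_cut_def is_cut_def by blast
    ultimately show False
      using kappa_cut_union_side_connected[OF U L L' \<open>L' \<noteq> L\<close>] by metis
  qed
  then have "card ?Z < card W"
    using others kappa_cut_finite[OF W] by (intro psubset_card_mono) auto
  moreover have "card ?Z = (\<Sum>S\<in>sides V E U - {L}. card S)"
  proof (rule card_Union_disjoint)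
    show "pairwise disjnt (sides V E U - {L})"
      unfolding pairwise_def disjnt_def using sides_disjoint by blast
    show "finite X" if "X \<in> sides V E U - {L}" for X
      using that side_subset finite_V by (meson DiffD1 finite_Diff finite_subset)
  qed
  ultimately show ?thesis
    using U W L unfolding small_with_large_side_def kappa_cut_def by simp
qed

lemma small_type_if_others_in_cut:
  fixes a :: nat
  assumes U: "kappa_cut V E U" and W: "kappa_cut V E W"
    and A: "bij_betw A {1..a} (sides V E U)" and "2 \<le> a"
    and others: "\<forall>X\<in>sides V E U - {X0}. X \<subseteq> W"
  shows "\<exists>L. small_with_large_side V E (kappa V E - 1) U L \<and> (\<forall>S\<in>sides V E U - {L}. S \<subseteq> W)"
proof -
  have "A 1 \<in> sides V E U" using bij_betw_apply[OF A] \<open>2 \<le> a\<close> by simp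
  then obtain L where L: "L \<in> sides V E U" and others_L: "\<forall>X\<in>sides V E U - {L}. X \<subseteq> W"
    using others by (cases "X0 \<in> sides V E U") blast+
  obtain L' where "L' \<in> sides V E U" "L' \<noteq> L"
    using bij_betw_ex_other[OF A \<open>2 \<le> a\<close> L] by blast
  then show ?thesis
    using small_with_large_side_if_others_in_cut[OF U W L _ _ others_L] others_L by blast
qed

text \<open>Without two opposite nonempty corners, the pairs of meeting sides form a star, so all
  sides of one cut but one avoid the other cut's sides entirely.\<close>

lemma small_types_if_no_opposite_corners:
  fixes a b :: nat
  assumes U: "kappa_cut V E U" and W: "kappa_cut V E W"
    and A: "bij_betw A {1..a} (sides V E U)" and "2 \<le> a"
    and B: "bij_betw B {1..b} (sides V E W)" and "2 \<le> b"
    and no_opposite: "\<not> (\<exists>X X' Y Y'. X \<in> sides V E U \<and> X' \<in> sides V E U \<and> X \<noteq> X' \<and>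
        Y \<in> sides V E W \<and> Y' \<in> sides V E W \<and> Y \<noteq> Y' \<and> X \<inter> Y \<noteq> {} \<and> X' \<inter> Y' \<noteq> {})"
  shows "(\<exists>L. small_with_large_side V E (kappa V E - 1) U L \<and> (\<forall>S\<in>sides V E U - {L}. S \<subseteq> W))
    \<or> (\<exists>L. small_with_large_side V E (kappa V E - 1) W L \<and> (\<forall>S\<in>sides V E W - {L}. S \<subseteq> U))"
proof -
  have "(\<exists>X0. \<forall>X Y. X \<in> sides V E U \<and> Y \<in> sides V E W \<and> X \<inter> Y \<noteq> {} \<longrightarrow> X = X0)
    \<or> (\<exists>Y0. \<forall>X Y. X \<in> sides V E U \<and> Y \<in> sides V E W \<and> X \<inter> Y \<noteq> {} \<longrightarrow> Y = Y0)"
    by (rule no_independent_pairs_star) (use no_opposite in blast)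
  then show ?thesis
  proof (elim disjE exE)
    fix X0 assume star: "\<forall>X Y. X \<in> sides V E U \<and> Y \<in> sides V E W \<and> X \<inter> Y \<noteq> {} \<longrightarrow> X = X0"
    have "\<forall>X\<in>sides V E U - {X0}. X \<subseteq> W"
    proof
      fix X assume "X \<in> sides V E U - {X0}"
      then show "X \<subseteq> W" using star by (intro side_subset_cut_if_disjoint) blast+
    qed
    then show ?thesis using small_type_if_others_in_cut[OF U W A \<open>2 \<le> a\<close>] by blast
  next
    fix Y0 assume star: "\<forall>X Y. X \<in> sides V E U \<and> Y \<in> sides V E W \<and> X \<inter> Y \<noteq> {} \<longrightarrow> Y = Y0"
    have "\<forall>Y\<in>sides V E W - {Y0}. Y \<subseteq> U"
    proof
      fix Y assume "Y \<in> sides V E W - {Y0}"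
      then show "Y \<subseteq> U" using star by (intro side_subset_cut_if_disjoint) blast+
    qed
    then show ?thesis using small_type_if_others_in_cut[OF W U B \<open>2 \<le> b\<close>] by blast
  qed
qed

lemma opposite_corners_types:
  fixes a b :: nat
  assumes U: "kappa_cut V E U" and W: "kappa_cut V E W"
    and A: "bij_betw A {1..a} (sides V E U)" and B: "bij_betw B {1..b} (sides V E W)"
    and not_laminar: "\<not> (\<exists>X\<in>sides V E U. W \<subseteq> U \<union> X)"
    and X: "X \<in> sides V E U" and X': "X' \<in> sides V E U" and "X \<noteq> X'"
    and Y: "Y \<in> sides V E W" and Y': "Y' \<in> sides V E W" and "Y \<noteq> Y'"
    and XY: "X \<inter> Y \<noteq> {}" and XY': "X' \<inter> Y' \<noteq> {}"
  shows "a = 2 \<and> b = 2 \<and>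
    (forms_wheel V E 4 (U \<inter> W) [U \<inter> B 1, W \<inter> A 1, U \<inter> B 2, W \<inter> A 2]
        [A 1 \<inter> B 1, A 1 \<inter> B 2, A 2 \<inter> B 2, A 2 \<inter> B 1]
     \<or> (\<exists>A1 A2 B1 B2. (A1, A2) \<in> {(A 1, A 2), (A 2, A 1)} \<and> (B1, B2) \<in> {(B 1, B 2), (B 2, B 1)} \<and>
          crossing_type V E U W A1 A2 B1 B2))"
proof -
  note cards = opposite_corners[OF U W X X' \<open>X \<noteq> X'\<close> Y Y' \<open>Y \<noteq> Y'\<close> XY XY']
  have WX: "W \<inter> X \<noteq> {}" "W \<inter> X' \<noteq> {}"
    using cards(4) not_laminar X X' by blast+
  then have "card (W \<inter> X) > 0" "card (W \<inter> X') > 0"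
    using kappa_cut_finite[OF W] by (simp_all add: card_gt_0_iff)
  then have "card (U \<inter> Y) > 0" "card (U \<inter> Y') > 0"
    using cards(1-3) by linarith+
  then have UY: "U \<inter> Y \<noteq> {}" "U \<inter> Y' \<noteq> {}"
    by auto
  have SU: "sides V E U = {X, X'}"
    by (rule opposite_corners_two_sides[OF U W X X' \<open>X \<noteq> X'\<close> Y Y' \<open>Y \<noteq> Y'\<close> XY XY' WX])
  note two_A = bij_betw_two[OF A SU \<open>X \<noteq> X'\<close>]
  have SW: "sides V E W = {Y, Y'}"
    using UY XY XY' by (intro opposite_corners_two_sides[OF W U Y Y' \<open>Y \<noteq> Y'\<close> X X' \<open>X \<noteq> X'\<close>]) blast+
  note two_B = bij_betw_two[OF B SW \<open>Y \<noteq> Y'\<close>]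
  have XA: "X = A 1 \<and> X' = A 2 \<or> X = A 2 \<and> X' = A 1"
    using two_A(2) SU by (metis doubleton_eq_iff)
  have YB: "Y = B 1 \<and> Y' = B 2 \<or> Y = B 2 \<and> Y' = B 1"
    using two_B(2) SW by (metis doubleton_eq_iff)
  have "W \<inter> A 1 \<noteq> {}" "W \<inter> A 2 \<noteq> {}" "U \<inter> B 1 \<noteq> {}" "U \<inter> B 2 \<noteq> {}"
    using XA YB WX UY by auto
  moreover have "(A 1 \<inter> B 1 \<noteq> {} \<and> A 2 \<inter> B 2 \<noteq> {}) \<or> (A 1 \<inter> B 2 \<noteq> {} \<and> A 2 \<inter> B 1 \<noteq> {})"
    using XA YB XY XY' by auto
  ultimately show ?thesis
    using two_A two_B two_sided_types[OF U W two_A(2,3) two_B(2,3)] by blast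
qed

end

theorem theorem2:
  fixes V :: "'v set" and E :: "'v \<Rightarrow> 'v \<Rightarrow> bool"
    and U W :: "'v set" and A B :: "nat \<Rightarrow> 'v set" and a b :: nat
  assumes graph: "simple_graph V E" and conn: "connected_graph V E"
    and noncomplete: "\<not> complete_graph V E"
    and kappa_small: "4 * kappa V E < card V"
    and U_cut: "kappa_cut V E U" and W_cut: "kappa_cut V E W" and UW: "W \<noteq> U"
    and a2: "a \<ge> 2" and b2: "b \<ge> 2"
    and A_sides: "bij_betw A {1..a} (sides V E U)"
    and B_sides: "bij_betw B {1..b} (sides V E W)"
  shows
    "(laminar_cut V E U W \<and>
       (\<exists>i\<in>{1..a}. \<exists>j\<in>{1..b}.
          B j - A i = (U - W) \<union> (\<Union>k\<in>{1..a} - {i}. A k) \<and>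
          A i - B j = (W - U) \<union> (\<Union>k\<in>{1..b} - {j}. B k)))
     \<or> (a = 2 \<and> b = 2 \<and>
          forms_wheel V E 4 (U \<inter> W)
            [U \<inter> B 1, W \<inter> A 1, U \<inter> B 2, W \<inter> A 2]
            [A 1 \<inter> B 1, A 1 \<inter> B 2, A 2 \<inter> B 2, A 2 \<inter> B 1])
     \<or> (a = 2 \<and> b = 2 \<and>
          (\<exists>A1 A2 B1 B2. (A1, A2) \<in> {(A 1, A 2), (A 2, A 1)} \<and> (B1, B2) \<in> {(B 1, B 2), (B 2, B 1)} \<and>
             A1 \<inter> B1 \<noteq> {} \<and> A2 \<inter> B2 \<noteq> {} \<and> A1 \<inter> B2 = {} \<and>
             card (W \<inter> A2) = card (U \<inter> B1) \<and> card (U \<inter> B1) > 0 \<and>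
             card (W \<inter> A1) = card (U \<inter> B2) \<and> card (U \<inter> B2) > 0 \<and>
             crossing_matching_cut V E U A1 (U \<inter> B2) W \<and>
             (A2 \<inter> B1 \<noteq> {} \<longrightarrow> card (U \<inter> B1) \<ge> card (U \<inter> B2))))
     \<or> (\<exists>L. small_with_large_side V E (kappa V E - 1) U L \<and> (\<forall>S\<in>sides V E U - {L}. S \<subseteq> W))
     \<or> (\<exists>L. small_with_large_side V E (kappa V E - 1) W L \<and> (\<forall>S\<in>sides V E W - {L}. S \<subseteq> U))"
proof -
  interpret sgraph V E by (rule sgraph.intro[OF graph])
  show ?thesis
  proof (cases "\<exists>X\<in>sides V E U. W \<subseteq> U \<union> X")
    case True
    then obtain X where "X \<in> sides V E U" "W \<subseteq> U \<union> X" by blast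
    then show ?thesis by (intro disjI1 laminar_type[OF U_cut W_cut UW A_sides a2 B_sides])
  next
    case not_laminar: False
    show ?thesis
    proof (cases "\<exists>X X' Y Y'. X \<in> sides V E U \<and> X' \<in> sides V E U \<and> X \<noteq> X' \<and>
        Y \<in> sides V E W \<and> Y' \<in> sides V E W \<and> Y \<noteq> Y' \<and> X \<inter> Y \<noteq> {} \<and> X' \<inter> Y' \<noteq> {}")
      case True
      then obtain X X' Y Y' where corners: "X \<in> sides V E U" "X' \<in> sides V E U" "X \<noteq> X'"
        "Y \<in> sides V E W" "Y' \<in> sides V E W" "Y \<noteq> Y'" "X \<inter> Y \<noteq> {}" "X' \<inter> Y' \<noteq> {}"
        by blast
      from opposite_corners_types[OF U_cut W_cut A_sides B_sides not_laminar corners]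
      show ?thesis unfolding crossing_type_def by blast
    next
      case False
      from small_types_if_no_opposite_corners[OF U_cut W_cut A_sides a2 B_sides b2 False]
      show ?thesis by blast
    qed
  qed
qed

end
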